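(* Let $K$ be a kernel on $\Omega\subset\mathbb{R}^d$ and either $K$ positive definite and $\lambda>0$, or $K$ strictly positive definite and $\lambda\ge0$. Let $X_n=\{x_1,\dots,x_n\}\subset\Omega$ be pairwise distinct. Then for all $x\in\Omega$ $$P_n^\lambda(x)^2=\|K(\cdot,x)-s_n^\lambda(K(\cdot,x))\|_{\mathcal{H}}^2=K(x,x)-2\sum_{k=1}^n v_k(x)^2+\sum_{k,l=1}^n v_k(x)v_l(x)(v_k,v_l)_{\mathcal{H}} .$$
   Context: A kernel is positive definite if symmetric with positive semidefinite kernel matrices on pairwise distinct points (strictly: positive definite matrices). $\mathcal{H}=\mathcal{H}_K(\Omega)$ is the native space (reproducing kernel Hilbert space) of $K$. With $A=(K(x_i,x_j))_{i,j=1}^n$, the regularized interpolant of $f:\Omega\to\mathbb{R}$ is $s_n^\lambda(f):=\sum_{j=1}^n\alpha_jK(\cdot,x_j)$ with $(A+\lambda I)\alpha=(f(x_1),\dots,f(x_n))^T$. The regularized power function is $P_n^\lambda(x):=\sup_{f\in\mathcal{H},f\ne0}|f(x)-s_n^\lambda(f)(x)|/\|f\|_{\mathcal{H}}$. Let $A+\lambda I=LL^T$ be the Cholesky factorization, $(\beta_{jk}):=L^{-T}$, and $v_k:=\sum_{j=1}^n\beta_{jk}K(\cdot,x_j)$, $1\le k\le n$. *)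

theory Defs
  imports "HOL-Analysis.Analysis" "Jordan_Normal_Form.Matrix"
begin

text \<open>Kernels on a domain Omega (kernel values outside Omega are irrelevant).\<close>

definition pd_kernel :: "'a set \<Rightarrow> ('a \<Rightarrow> 'a \<Rightarrow> real) \<Rightarrow> bool" where
  "pd_kernel \<Omega> K \<longleftrightarrow> (\<forall>x\<in>\<Omega>. \<forall>y\<in>\<Omega>. K x y = K y x) \<and>
     (\<forall>n (xs :: nat \<Rightarrow> 'a). (\<forall>i<n. xs i \<in> \<Omega>) \<and> inj_on xs {..<n} \<longrightarrow>
        (\<forall>c :: nat \<Rightarrow> real. (\<Sum>i<n. \<Sum>j<n. c i * c j * K (xs i) (xs j)) \<ge> 0))"

definition spd_kernel :: "'a set \<Rightarrow> ('a \<Rightarrow> 'a \<Rightarrow> real) \<Rightarrow> bool" where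
  "spd_kernel \<Omega> K \<longleftrightarrow> (\<forall>x\<in>\<Omega>. \<forall>y\<in>\<Omega>. K x y = K y x) \<and>
     (\<forall>n (xs :: nat \<Rightarrow> 'a). (\<forall>i<n. xs i \<in> \<Omega>) \<and> inj_on xs {..<n} \<longrightarrow>
        (\<forall>c :: nat \<Rightarrow> real. (\<exists>i<n. c i \<noteq> 0) \<longrightarrow>
            (\<Sum>i<n. \<Sum>j<n. c i * c j * K (xs i) (xs j)) > 0))"

definition kfun :: "'a set \<Rightarrow> ('a \<Rightarrow> 'a \<Rightarrow> real) \<Rightarrow> 'a \<Rightarrow> ('a \<Rightarrow> real)" where
  "kfun \<Omega> K x = (\<lambda>y. if y \<in> \<Omega> then K y x else 0)"

definition hnorm :: "(('a \<Rightarrow> real) \<Rightarrow> ('a \<Rightarrow> real) \<Rightarrow> real) \<Rightarrow> ('a \<Rightarrow> real) \<Rightarrow> real" where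
  "hnorm ip f = sqrt (ip f f)"

definition native_space ::
  "'a set \<Rightarrow> ('a \<Rightarrow> 'a \<Rightarrow> real) \<Rightarrow> ('a \<Rightarrow> real) set \<Rightarrow> (('a \<Rightarrow> real) \<Rightarrow> ('a \<Rightarrow> real) \<Rightarrow> real) \<Rightarrow> bool" where
  "native_space \<Omega> K H ip \<longleftrightarrow>
     (\<forall>f\<in>H. \<forall>y. y \<notin> \<Omega> \<longrightarrow> f y = 0) \<and>
     (\<lambda>y. 0) \<in> H \<and> (\<forall>f\<in>H. \<forall>g\<in>H. (\<lambda>y. f y + g y) \<in> H) \<and> (\<forall>c. \<forall>f\<in>H. (\<lambda>y. c * f y) \<in> H) \<and>
     (\<forall>f\<in>H. \<forall>g\<in>H. ip f g = ip g f) \<and>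
     (\<forall>f\<in>H. \<forall>g\<in>H. \<forall>h\<in>H. ip (\<lambda>y. f y + g y) h = ip f h + ip g h) \<and>
     (\<forall>c. \<forall>f\<in>H. \<forall>g\<in>H. ip (\<lambda>y. c * f y) g = c * ip f g) \<and>
     (\<forall>f\<in>H. f \<noteq> (\<lambda>y. 0) \<longrightarrow> ip f f > 0) \<and>
     (\<forall>u :: nat \<Rightarrow> ('a \<Rightarrow> real). (\<forall>k. u k \<in> H) \<and>
        (\<forall>e>0. \<exists>N. \<forall>m\<ge>N. \<forall>k\<ge>N. hnorm ip (\<lambda>y. u m y - u k y) < e) \<longrightarrow>
        (\<exists>f\<in>H. (\<lambda>k. hnorm ip (\<lambda>y. u k y - f y)) \<longlonglongrightarrow> 0)) \<and>
     (\<forall>x\<in>\<Omega>. kfun \<Omega> K x \<in> H) \<and>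
     (\<forall>f\<in>H. \<forall>x\<in>\<Omega>. ip f (kfun \<Omega> K x) = f x)"

text \<open>Points are indexed 0..n-1 (the paper uses 1..n).\<close>
definition kernel_mat :: "('a \<Rightarrow> 'a \<Rightarrow> real) \<Rightarrow> (nat \<Rightarrow> 'a) \<Rightarrow> nat \<Rightarrow> real mat" where
  "kernel_mat K xs n = mat n n (\<lambda>(i, j). K (xs i) (xs j))"

definition reg_mat :: "('a \<Rightarrow> 'a \<Rightarrow> real) \<Rightarrow> (nat \<Rightarrow> 'a) \<Rightarrow> nat \<Rightarrow> real \<Rightarrow> real mat" where
  "reg_mat K xs n lam = kernel_mat K xs n + lam \<cdot>\<^sub>m 1\<^sub>m n"

definition reg_interp ::
  "'a set \<Rightarrow> ('a \<Rightarrow> 'a \<Rightarrow> real) \<Rightarrow> (nat \<Rightarrow> 'a) \<Rightarrow> nat \<Rightarrow> real \<Rightarrow> ('a \<Rightarrow> real) \<Rightarrow> ('a \<Rightarrow> real)" where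
  "reg_interp \<Omega> K xs n lam f =
     (let \<alpha> = (THE \<alpha>. \<alpha> \<in> carrier_vec n \<and> reg_mat K xs n lam *\<^sub>v \<alpha> = vec n (\<lambda>j. f (xs j)))
      in (\<lambda>y. \<Sum>j<n. \<alpha> $ j * kfun \<Omega> K (xs j) y))"

text \<open>Regularized power function (sup over the empty set taken as 0).\<close>
definition power_fun ::
  "'a set \<Rightarrow> ('a \<Rightarrow> 'a \<Rightarrow> real) \<Rightarrow> ('a \<Rightarrow> real) set \<Rightarrow> (('a \<Rightarrow> real) \<Rightarrow> ('a \<Rightarrow> real) \<Rightarrow> real)
    \<Rightarrow> (nat \<Rightarrow> 'a) \<Rightarrow> nat \<Rightarrow> real \<Rightarrow> 'a \<Rightarrow> real" where
  "power_fun \<Omega> K H ip xs n lam x =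
     Sup (insert 0 {\<bar>f x - reg_interp \<Omega> K xs n lam f x\<bar> / hnorm ip f | f. f \<in> H \<and> f \<noteq> (\<lambda>y. 0)})"

definition cholesky :: "real mat \<Rightarrow> real mat" where
  "cholesky M = (THE L. L \<in> carrier_mat (dim_row M) (dim_row M) \<and>
      upper_triangular (transpose_mat L) \<and> (\<forall>i<dim_row M. L $$ (i, i) > 0) \<and>
      M = L * transpose_mat L)"

definition mat_inv :: "real mat \<Rightarrow> real mat" where
  "mat_inv B = (THE C. C \<in> carrier_mat (dim_row B) (dim_row B) \<and> inverts_mat B C \<and> inverts_mat C B)"

definition chol_v ::
  "'a set \<Rightarrow> ('a \<Rightarrow> 'a \<Rightarrow> real) \<Rightarrow> (nat \<Rightarrow> 'a) \<Rightarrow> nat \<Rightarrow> real \<Rightarrow> nat \<Rightarrow> ('a \<Rightarrow> real)" where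
  "chol_v \<Omega> K xs n lam k =
     (let \<beta> = mat_inv (transpose_mat (cholesky (reg_mat K xs n lam)))
      in (\<lambda>y. \<Sum>j<n. \<beta> $$ (j, k) * kfun \<Omega> K (xs j) y))"

end

theory Submission
  imports Defs "Jordan_Normal_Form.Determinant"
begin

(* With beta beta^T = (A + lambda I)^{-1} and, by the reproducing property,
   (f, v_k)_H = sum_j beta_jk f(x_j), the regularized interpolant is the expansion
   s(f) = sum_k (f, v_k)_H v_k.  Hence f(x) - s(f)(x) = (f, g)_H for every f in H,
   where g = K(.,x) - s(K(.,x)); by Cauchy-Schwarz, with equality at f = g, the power
   function is the norm of g, and expanding (g, g)_H with s(K(.,x)) = sum_k v_k(x) v_k
   gives the formula.  The Cholesky factor comes from Gram-Schmidt orthonormalisation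
   of the unit vectors in the inner product defined by A + lambda I, which is positive
   definite under either hypothesis on K and lambda. *)

section \<open>Cholesky factorisation of positive definite matrices\<close>

definition kronecker :: "nat \<Rightarrow> nat \<Rightarrow> real" where
  "kronecker i j = (if i = j then 1 else 0)"

definition mat_form :: "real mat \<Rightarrow> (nat \<Rightarrow> real) \<Rightarrow> (nat \<Rightarrow> real) \<Rightarrow> real" where
  "mat_form M c d = (\<Sum>i<dim_row M. \<Sum>j<dim_row M. c i * d j * M $$ (i, j))"

definition sym_pos_def_mat :: "real mat \<Rightarrow> bool" where
  "sym_pos_def_mat M \<longleftrightarrow> square_mat M \<and>
     (\<forall>i<dim_row M. \<forall>j<dim_row M. M $$ (i, j) = M $$ (j, i)) \<and>
     (\<forall>c. (\<exists>i<dim_row M. c i \<noteq> 0) \<longrightarrow> mat_form M c c > 0)"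

lemma sum_kronecker_right [simp]:
  "(\<Sum>k\<in>I. a k * kronecker k l) = (if l \<in> I then a l else 0)" if "finite I"
proof -
  have "(\<Sum>k\<in>I. a k * kronecker k l) = (\<Sum>k\<in>I. if k = l then a k else 0)"
    by (rule sum.cong) (auto simp: kronecker_def)
  then show ?thesis using that by (simp add: sum.delta')
qed

lemma sum_kronecker_left [simp]:
  "(\<Sum>k\<in>I. kronecker l k * a k) = (if l \<in> I then a l else 0)" if "finite I"
proof -
  have "(\<Sum>k\<in>I. kronecker l k * a k) = (\<Sum>k\<in>I. if k = l then a k else 0)"
    by (rule sum.cong) (auto simp: kronecker_def)
  then show ?thesis using that by (simp add: sum.delta')
qed

lemma mat_form_sum_left:
  "finite I \<Longrightarrow> mat_form M (\<lambda>j. \<Sum>k\<in>I. a k * q k j) d = (\<Sum>k\<in>I. a k * mat_form M (q k) d)"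
  unfolding mat_form_def
  by (simp add: sum_distrib_left sum_distrib_right mult.assoc mult.left_commute sum.swap[of _ I])

lemma mat_form_diff_left: "mat_form M (\<lambda>j. c j - d j) e = mat_form M c e - mat_form M d e"
  unfolding mat_form_def by (simp add: algebra_simps sum_subtractf)

lemma mat_form_add_left: "mat_form M (\<lambda>j. c j + d j) e = mat_form M c e + mat_form M d e"
  unfolding mat_form_def by (simp add: algebra_simps sum.distrib)

lemma mat_form_divide_left: "mat_form M (\<lambda>j. c j / a) e = mat_form M c e / a"
  unfolding mat_form_def by (simp add: sum_divide_distrib)

lemma mat_form_divide_right: "mat_form M e (\<lambda>j. c j / a) = mat_form M e c / a"
  unfolding mat_form_def by (simp add: sum_divide_distrib)

lemma mat_form_commute:
  "sym_pos_def_mat M \<Longrightarrow> mat_form M c d = mat_form M d c"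
  unfolding mat_form_def sym_pos_def_mat_def
  by (subst sum.swap) (auto intro!: sum.cong simp: mult.commute)

lemma mat_form_kronecker:
  "i < dim_row M \<Longrightarrow> j < dim_row M \<Longrightarrow> mat_form M (kronecker i) (kronecker j) = M $$ (i, j)"
  unfolding mat_form_def by (simp add: mult.assoc flip: sum_distrib_left)

definition gram_schmidt_system :: "real mat \<Rightarrow> nat \<Rightarrow> (nat \<Rightarrow> nat \<Rightarrow> real) \<Rightarrow> bool" where
  "gram_schmidt_system M m q \<longleftrightarrow> (\<forall>k<m. \<forall>j>k. q k j = 0) \<and>
     (\<forall>k<m. \<forall>l<m. mat_form M (q k) (q l) = kronecker k l) \<and>
     (\<forall>i<m. kronecker i = (\<lambda>j. \<Sum>k\<le>i. mat_form M (kronecker i) (q k) * q k j)) \<and>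
     (\<forall>i<m. mat_form M (kronecker i) (q i) > 0)"

lemma gram_schmidt_systemD:
  assumes "gram_schmidt_system M m q"
  shows "k < m \<Longrightarrow> k < j \<Longrightarrow> q k j = 0"
    and "k < m \<Longrightarrow> l < m \<Longrightarrow> mat_form M (q k) (q l) = kronecker k l"
    and "i < m \<Longrightarrow> kronecker i = (\<lambda>j. \<Sum>k\<le>i. mat_form M (kronecker i) (q k) * q k j)"
    and "i < m \<Longrightarrow> mat_form M (kronecker i) (q i) > 0"
  using assms unfolding gram_schmidt_system_def by blast+

lemma gram_schmidt_residual:
  assumes M: "sym_pos_def_mat M" and m: "m < dim_row M" and q: "gram_schmidt_system M m q"
  defines "r \<equiv> \<lambda>j. kronecker m j - (\<Sum>k<m. mat_form M (kronecker m) (q k) * q k j)"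
  shows "mat_form M r r > 0" and "\<forall>l<m. mat_form M r (q l) = 0"
proof -
  have "r m = 1"
    using q by (simp add: gram_schmidt_system_def r_def kronecker_def)
  then show "mat_form M r r > 0"
    using M m unfolding sym_pos_def_mat_def by (metis one_neq_zero)
  show "\<forall>l<m. mat_form M r (q l) = 0"
    using q by (simp add: gram_schmidt_system_def r_def mat_form_diff_left mat_form_sum_left)
qed

lemma gram_schmidt_system_Suc:
  assumes M: "sym_pos_def_mat M" and m: "m < dim_row M" and q: "gram_schmidt_system M m q"
  shows "\<exists>q'. gram_schmidt_system M (Suc m) q'"
proof -
  define a where "a k = mat_form M (kronecker m) (q k)" for k
  define r where "r j = kronecker m j - (\<Sum>k<m. a k * q k j)" for j
  have rr: "mat_form M r r > 0" and rq: "\<forall>l<m. mat_form M r (q l) = 0"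
    using gram_schmidt_residual[OF M m q] unfolding r_def[abs_def] a_def by auto
  define s where "s = sqrt (mat_form M r r)"
  have s: "s > 0" "s * s = mat_form M r r" using rr by (simp_all add: s_def)
  define q' where "q' = q(m := (\<lambda>j. r j / s))"
  have q'm_q'm: "mat_form M (q' m) (q' m) = 1"
    using s by (simp add: q'_def mat_form_divide_left mat_form_divide_right flip: s(2))
  have q'm_q: "mat_form M (q' m) (q l) = 0" "mat_form M (q l) (q' m) = 0" if "l < m" for l
    using rq that mat_form_commute[OF M, of "q l"]
    by (simp_all add: q'_def mat_form_divide_left)
  have "kronecker m = (\<lambda>j. r j + (\<Sum>k<m. a k * q k j))" by (simp add: r_def)
  then have kronecker_q'm: "mat_form M (kronecker m) (q' m) = s"
    using q'm_q(2) s
    by (simp add: mat_form_add_left mat_form_sum_left q'_def mat_form_divide_right flip: s(2))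
  have "gram_schmidt_system M (Suc m) q'"
    unfolding gram_schmidt_system_def
  proof (intro conjI allI impI)
    fix k j assume "k < Suc m" "k < j"
    then show "q' k j = 0"
      using q by (cases "k = m") (auto simp: gram_schmidt_system_def q'_def r_def kronecker_def)
  next
    fix k l assume "k < Suc m" "l < Suc m"
    then show "mat_form M (q' k) (q' l) = kronecker k l"
      using q q'm_q'm q'm_q
      by (cases "k = m"; cases "l = m") (auto simp: gram_schmidt_system_def q'_def kronecker_def)
  next
    fix i assume "i < Suc m"
    then show "kronecker i = (\<lambda>j. \<Sum>k\<le>i. mat_form M (kronecker i) (q' k) * q' k j)"
      using q kronecker_q'm s(1)
      by (cases "i = m")
        (simp_all add: gram_schmidt_system_def r_def a_def q'_def lessThan_Suc_atMost[symmetric])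
  next
    fix i assume "i < Suc m"
    then show "mat_form M (kronecker i) (q' i) > 0"
      using q kronecker_q'm s(1) by (cases "i = m") (auto simp: gram_schmidt_system_def q'_def)
  qed
  then show ?thesis by blast
qed

lemma gram_schmidt_system_exists:
  "sym_pos_def_mat M \<Longrightarrow> m \<le> dim_row M \<Longrightarrow> \<exists>q. gram_schmidt_system M m q"
proof (induction m)
  case 0
  then show ?case by (simp add: gram_schmidt_system_def)
next
  case (Suc m)
  then have "m < dim_row M" by simp
  moreover obtain q where "gram_schmidt_system M m q"
    using Suc calculation by auto
  ultimately show ?case using gram_schmidt_system_Suc[OF Suc.prems(1)] by blast
qed

lemma gram_schmidt_system_expand:
  assumes q: "gram_schmidt_system M m q" and i: "i < m"
  shows "mat_form M (kronecker i) d = (\<Sum>k\<le>i. mat_form M (kronecker i) (q k) * mat_form M (q k) d)"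
proof -
  from gram_schmidt_systemD(3)[OF q i]
  have "mat_form M (kronecker i) d
      = mat_form M (\<lambda>j. \<Sum>k\<le>i. mat_form M (kronecker i) (q k) * q k j) d"
    by (rule arg_cong[where f = "\<lambda>c. mat_form M c d"])
  also have "\<dots> = (\<Sum>k\<le>i. mat_form M (kronecker i) (q k) * mat_form M (q k) d)"
    by (rule mat_form_sum_left) simp
  finally show ?thesis .
qed

definition is_cholesky_factor :: "real mat \<Rightarrow> real mat \<Rightarrow> bool" where
  "is_cholesky_factor M L \<longleftrightarrow> L \<in> carrier_mat (dim_row M) (dim_row M) \<and>
     upper_triangular (transpose_mat L) \<and> (\<forall>i<dim_row M. L $$ (i, i) > 0) \<and>
     M = L * transpose_mat L"

lemma index_mult_transpose_mat:
  "L \<in> carrier_mat n m \<Longrightarrow> i < n \<Longrightarrow> j < n \<Longrightarrow>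
    (L * transpose_mat L) $$ (i, j) = (\<Sum>k<m. L $$ (i, k) * L $$ (j, k))"
  by (simp add: scalar_prod_def atLeast0LessThan)

lemma cholesky_factor_exists:
  assumes M: "sym_pos_def_mat M"
  shows "\<exists>L. is_cholesky_factor M L"
proof -
  define n where "n = dim_row M"
  obtain q where q: "gram_schmidt_system M n q"
    using gram_schmidt_system_exists[OF M] by (auto simp: n_def)
  define L where "L = mat n n (\<lambda>(i, k). mat_form M (kronecker i) (q k))"
  have Lc: "L \<in> carrier_mat n n" by (simp add: L_def)
  have above: "L $$ (i, k) = 0" if "i < k" "k < n" for i k
  proof -
    have "L $$ (i, k) = mat_form M (kronecker i) (q k)"
      using that by (simp add: L_def)
    also have "\<dots> = (\<Sum>k'\<le>i. mat_form M (kronecker i) (q k') * mat_form M (q k') (q k))"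
      using that by (intro gram_schmidt_system_expand[OF q]) simp
    also have "\<dots> = 0"
      using gram_schmidt_systemD(2)[OF q] that by simp
    finally show ?thesis .
  qed
  have "M $$ (i, j) = (L * transpose_mat L) $$ (i, j)" if ij: "i < n" "j < n" for i j
  proof -
    have "M $$ (i, j) = mat_form M (kronecker i) (kronecker j)"
      using ij by (simp add: mat_form_kronecker n_def)
    also have "\<dots> = (\<Sum>k\<le>i. mat_form M (kronecker i) (q k) * mat_form M (q k) (kronecker j))"
      using q ij(1) by (rule gram_schmidt_system_expand)
    also have "\<dots> = (\<Sum>k\<le>i. L $$ (i, k) * L $$ (j, k))"
      using ij mat_form_commute[OF M] by (intro sum.cong) (simp_all add: L_def)
    also have "\<dots> = (\<Sum>k<n. L $$ (i, k) * L $$ (j, k))"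
      using ij above by (intro sum.mono_neutral_left) auto
    also have "\<dots> = (L * transpose_mat L) $$ (i, j)"
      by (rule index_mult_transpose_mat[OF Lc ij, symmetric])
    finally show ?thesis .
  qed
  moreover have "dim_col M = n"
    using M by (simp add: sym_pos_def_mat_def square_mat.simps n_def)
  ultimately have "M = L * transpose_mat L"
    using Lc by (intro eq_matI) (simp_all add: n_def)
  moreover have "upper_triangular (transpose_mat L)"
    using above by (auto simp: upper_triangular_def L_def)
  moreover have "\<forall>i<n. L $$ (i, i) > 0"
    using gram_schmidt_systemD(4)[OF q] by (simp add: L_def)
  ultimately have "is_cholesky_factor M L"
    using Lc unfolding is_cholesky_factor_def n_def by blast
  then show ?thesis ..
qed

text \<open>By induction over the columns: the (i, j) entry of the Gram identity determines
  a i j * a j j once the columns before j are known.\<close>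

lemma lower_triangular_gram_unique:
  fixes a b :: "nat \<Rightarrow> nat \<Rightarrow> real"
  assumes gram: "\<forall>i<n. \<forall>j<n. (\<Sum>k<n. a i k * a j k) = (\<Sum>k<n. b i k * b j k)"
    and a_lower: "\<forall>i<n. \<forall>k<n. i < k \<longrightarrow> a i k = 0"
    and b_lower: "\<forall>i<n. \<forall>k<n. i < k \<longrightarrow> b i k = 0"
    and a_diag: "\<forall>i<n. a i i > 0" and b_diag: "\<forall>i<n. b i i > 0"
  shows "j < n \<Longrightarrow> \<forall>i<n. a i j = b i j"
proof (induction j rule: less_induct)
  case (less j)
  have split: "(\<Sum>k<n. c i k * c j k) = (\<Sum>k<j. c i k * c j k) + c i j * c j j"
    if "\<forall>k<n. j < k \<longrightarrow> c j k = 0" for c :: "nat \<Rightarrow> nat \<Rightarrow> real" and i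
  proof -
    have "(\<Sum>k<n. c i k * c j k) = (\<Sum>k<Suc j. c i k * c j k)"
      using less.prems that by (intro sum.mono_neutral_right) auto
    then show ?thesis by simp
  qed
  have a_row: "\<forall>k<n. j < k \<longrightarrow> a j k = 0" and b_row: "\<forall>k<n. j < k \<longrightarrow> b j k = 0"
    using a_lower b_lower less.prems by blast+
  have column: "a i j * a j j = b i j * b j j" if "i < n" for i
  proof -
    have "(\<Sum>k<j. a i k * a j k) = (\<Sum>k<j. b i k * b j k)"
      using less.IH less.prems that by (intro sum.cong) auto
    then show ?thesis
      using gram[rule_format, OF that less.prems] split[of a i, OF a_row] split[of b i, OF b_row] by simp
  qed
  have "a j j ^ 2 = b j j ^ 2"
    using column[OF less.prems] by (simp add: power2_eq_square)
  then have diag: "a j j = b j j"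
    using a_diag b_diag less.prems by (simp add: power2_eq_imp_eq less_imp_le)
  have "a j j \<noteq> 0"
    using a_diag less.prems by (simp add: less_imp_neq[symmetric])
  then show ?case
    using column diag by simp
qed

lemma is_cholesky_factorD:
  assumes "is_cholesky_factor M L"
  shows "L \<in> carrier_mat (dim_row M) (dim_row M)" and "M = L * transpose_mat L"
    and "i < dim_row M \<Longrightarrow> L $$ (i, i) > 0"
    and "i < k \<Longrightarrow> k < dim_row M \<Longrightarrow> L $$ (i, k) = 0"
proof -
  show L: "L \<in> carrier_mat (dim_row M) (dim_row M)" and "M = L * transpose_mat L"
    and "i < dim_row M \<Longrightarrow> L $$ (i, i) > 0"
    using assms unfolding is_cholesky_factor_def by blast+
  assume "i < k" "k < dim_row M"
  moreover have "upper_triangular (transpose_mat L)"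
    using assms unfolding is_cholesky_factor_def by blast
  ultimately have "transpose_mat L $$ (k, i) = 0"
    using L unfolding upper_triangular_def by simp
  then show "L $$ (i, k) = 0"
    using L \<open>i < k\<close> \<open>k < dim_row M\<close> by simp
qed

lemma cholesky_factor_unique:
  assumes L1: "is_cholesky_factor M L1" and L2: "is_cholesky_factor M L2"
  shows "L1 = L2"
proof -
  define n where "n = dim_row M"
  note c1 = is_cholesky_factorD(1)[OF L1, folded n_def]
  note c2 = is_cholesky_factorD(1)[OF L2, folded n_def]
  have "L1 * transpose_mat L1 = L2 * transpose_mat L2"
    using is_cholesky_factorD(2)[OF L1] is_cholesky_factorD(2)[OF L2] by simp
  then have "\<forall>i<n. \<forall>j<n. (\<Sum>k<n. L1 $$ (i, k) * L1 $$ (j, k)) = (\<Sum>k<n. L2 $$ (i, k) * L2 $$ (j, k))"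
    by (simp flip: index_mult_transpose_mat[OF c1] index_mult_transpose_mat[OF c2])
  from lower_triangular_gram_unique[OF this] have "\<forall>i<n. L1 $$ (i, j) = L2 $$ (i, j)" if "j < n" for j
    using is_cholesky_factorD(3,4)[OF L1] is_cholesky_factorD(3,4)[OF L2] that by (simp add: n_def)
  then show ?thesis using c1 c2 by (intro eq_matI) auto
qed

lemma cholesky_is_cholesky_factor:
  "sym_pos_def_mat M \<Longrightarrow> is_cholesky_factor M (cholesky M)"
proof -
  assume "sym_pos_def_mat M"
  then have "\<exists>!L. is_cholesky_factor M L"
    using cholesky_factor_exists cholesky_factor_unique by blast
  then show ?thesis
    unfolding cholesky_def is_cholesky_factor_def[symmetric] by (rule theI')
qed

lemma mat_inv_inverse:
  fixes A :: "real mat"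
  assumes A: "A \<in> carrier_mat n n" and det: "Determinant.det A \<noteq> 0"
  shows "mat_inv A \<in> carrier_mat n n" and "A * mat_inv A = 1\<^sub>m n" and "mat_inv A * A = 1\<^sub>m n"
proof -
  obtain B where B: "B \<in> carrier_mat n n" "A * B = 1\<^sub>m n" "B * A = 1\<^sub>m n"
    using det_non_zero_imp_unit[OF A det, of "()"] unfolding Units_def ring_mat_def by auto
  have "mat_inv A = B"
    unfolding mat_inv_def
  proof (rule the_equality)
    show "B \<in> carrier_mat (dim_row A) (dim_row A) \<and> inverts_mat A B \<and> inverts_mat B A"
      using A B by (simp add: inverts_mat_def)
  next
    fix C assume "C \<in> carrier_mat (dim_row A) (dim_row A) \<and> inverts_mat A C \<and> inverts_mat C A"
    then have C: "C \<in> carrier_mat n n" "C * A = 1\<^sub>m n"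
      using A by (auto simp: inverts_mat_def)
    have "C = C * (A * B)" using B(2) C(1) by simp
    also have "\<dots> = (C * A) * B" using A B(1) C(1) by (simp add: assoc_mult_mat)
    finally show "C = B" using B(1) C(2) by simp
  qed
  then show "mat_inv A \<in> carrier_mat n n" "A * mat_inv A = 1\<^sub>m n" "mat_inv A * A = 1\<^sub>m n"
    using B by simp_all
qed

lemma det_transpose_cholesky_factor_pos:
  assumes L: "is_cholesky_factor M L"
  shows "Determinant.det (transpose_mat L) > 0"
proof -
  have "upper_triangular (transpose_mat L)"
    using L unfolding is_cholesky_factor_def by blast
  then have "Determinant.det (transpose_mat L) = (\<Prod>i<dim_row M. L $$ (i, i))"
    using is_cholesky_factorD(1)[OF L]
    by (simp add: det_upper_triangular prod_list_diag_prod atLeast0LessThan)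
  also have "\<dots> > 0"
    using is_cholesky_factorD(3)[OF L] by (intro prod_pos) simp
  finally show ?thesis .
qed

lemma cholesky_inverse_gram:
  assumes M: "sym_pos_def_mat M"
  defines "\<beta> \<equiv> mat_inv (transpose_mat (cholesky M))"
  shows "\<beta> \<in> carrier_mat (dim_row M) (dim_row M)" and "\<beta> * transpose_mat \<beta> * M = 1\<^sub>m (dim_row M)"
proof -
  define n where "n = dim_row M"
  define L where "L = cholesky M"
  have L: "is_cholesky_factor M L"
    using cholesky_is_cholesky_factor[OF M] by (simp add: L_def)
  have Lc: "L \<in> carrier_mat n n" and LTc: "transpose_mat L \<in> carrier_mat n n"
    using is_cholesky_factorD(1)[OF L] by (simp_all add: n_def)
  note inv = mat_inv_inverse[OF LTc det_transpose_cholesky_factor_pos[OF L, THEN less_imp_neq, symmetric]]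
  show \<beta>: "\<beta> \<in> carrier_mat (dim_row M) (dim_row M)"
    using inv(1) by (simp add: \<beta>_def L_def n_def)
  have \<beta>L: "\<beta> * transpose_mat L = 1\<^sub>m n" and \<beta>TL: "transpose_mat \<beta> * L = 1\<^sub>m n"
    using inv(3) transpose_mult[OF LTc inv(1)] inv(2) by (simp_all add: \<beta>_def L_def)
  have \<beta>T: "transpose_mat \<beta> \<in> carrier_mat n n" and LLT: "L * transpose_mat L \<in> carrier_mat n n"
    using \<beta> Lc by (simp_all add: n_def)
  have "\<beta> * transpose_mat \<beta> * M = \<beta> * (transpose_mat \<beta> * (L * transpose_mat L))"
    using assoc_mult_mat[OF \<beta>[folded n_def] \<beta>T LLT] is_cholesky_factorD(2)[OF L] by simp
  also have "transpose_mat \<beta> * (L * transpose_mat L) = transpose_mat L"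
    using assoc_mult_mat[OF \<beta>T Lc LTc] \<beta>TL LTc by simp
  finally show "\<beta> * transpose_mat \<beta> * M = 1\<^sub>m (dim_row M)"
    using \<beta>L by (simp add: n_def)
qed

lemma the_mat_solution:
  fixes M G :: "real mat"
  assumes M: "M \<in> carrier_mat n n" and G: "G \<in> carrier_mat n n" and GM: "G * M = 1\<^sub>m n"
    and b: "b \<in> carrier_vec n"
  shows "(THE \<alpha>. \<alpha> \<in> carrier_vec n \<and> M *\<^sub>v \<alpha> = b) = G *\<^sub>v b"
proof (rule the_equality)
  have "M * G = 1\<^sub>m n" by (rule mat_mult_left_right_inverse[OF G M GM])
  then show "G *\<^sub>v b \<in> carrier_vec n \<and> M *\<^sub>v (G *\<^sub>v b) = b"
    using assoc_mult_mat_vec[OF M G b] G b by simp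
next
  fix \<alpha> assume \<alpha>: "\<alpha> \<in> carrier_vec n \<and> M *\<^sub>v \<alpha> = b"
  then have "\<alpha> = (G * M) *\<^sub>v \<alpha>" using GM by simp
  also have "\<dots> = G *\<^sub>v b" using M G \<alpha> by simp
  finally show "\<alpha> = G *\<^sub>v b" .
qed

section \<open>The regularized kernel matrix and interpolant\<close>

lemma reg_mat_carrier: "reg_mat K xs n lam \<in> carrier_mat n n"
  by (simp add: reg_mat_def kernel_mat_def)

lemma index_reg_mat:
  "i < n \<Longrightarrow> j < n \<Longrightarrow> reg_mat K xs n lam $$ (i, j) = K (xs i) (xs j) + lam * kronecker i j"
  by (simp add: reg_mat_def kernel_mat_def kronecker_def)

lemma mat_form_reg_mat:
  "mat_form (reg_mat K xs n lam) c c
    = (\<Sum>i<n. \<Sum>j<n. c i * c j * K (xs i) (xs j)) + lam * (\<Sum>i<n. c i ^ 2)"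
proof -
  have "mat_form (reg_mat K xs n lam) c c
      = (\<Sum>i<n. (\<Sum>j<n. c i * c j * K (xs i) (xs j)) + lam * c i * (\<Sum>j<n. kronecker i j * c j))"
    using reg_mat_carrier[of K xs n lam]
    by (simp add: mat_form_def index_reg_mat algebra_simps sum.distrib sum_distrib_left)
  then show ?thesis
    by (simp add: sum.distrib sum_distrib_left power2_eq_square mult.assoc)
qed

lemma reg_mat_sym_pos_def:
  assumes kernel: "(pd_kernel \<Omega> K \<and> lam > 0) \<or> (spd_kernel \<Omega> K \<and> lam \<ge> 0)"
    and xs: "\<forall>i<n. xs i \<in> \<Omega>" "inj_on xs {..<n}"
  shows "sym_pos_def_mat (reg_mat K xs n lam)"
proof -
  have "K (xs i) (xs j) = K (xs j) (xs i)" if "i < n" "j < n" for i j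
    using kernel xs that unfolding pd_kernel_def spd_kernel_def by blast
  moreover have "mat_form (reg_mat K xs n lam) c c > 0" if c: "\<exists>i<n. c i \<noteq> 0" for c
  proof -
    have squares: "(\<Sum>i<n. c i ^ 2) > 0"
      using c by (auto intro: sum_pos2)
    from kernel show ?thesis
    proof
      assume "pd_kernel \<Omega> K \<and> lam > 0"
      then show ?thesis
        using xs squares unfolding mat_form_reg_mat pd_kernel_def
        by (intro add_nonneg_pos) auto
    next
      assume "spd_kernel \<Omega> K \<and> lam \<ge> 0"
      then show ?thesis
        using xs squares c unfolding mat_form_reg_mat spd_kernel_def
        by (intro add_pos_nonneg) auto
    qed
  qed
  ultimately show ?thesis
    using reg_mat_carrier[of K xs n lam]
    by (simp add: sym_pos_def_mat_def index_reg_mat kronecker_def)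
qed

definition chol_beta :: "('a \<Rightarrow> 'a \<Rightarrow> real) \<Rightarrow> (nat \<Rightarrow> 'a) \<Rightarrow> nat \<Rightarrow> real \<Rightarrow> real mat" where
  "chol_beta K xs n lam = mat_inv (transpose_mat (cholesky (reg_mat K xs n lam)))"

lemma chol_v_eq:
  "chol_v \<Omega> K xs n lam k = (\<lambda>y. \<Sum>j<n. chol_beta K xs n lam $$ (j, k) * kfun \<Omega> K (xs j) y)"
  by (simp add: chol_v_def chol_beta_def)

lemma reg_interp_eq_sum_chol_v:
  assumes M: "sym_pos_def_mat (reg_mat K xs n lam)"
  shows "reg_interp \<Omega> K xs n lam f
    = (\<lambda>y. \<Sum>k<n. (\<Sum>l<n. chol_beta K xs n lam $$ (l, k) * f (xs l)) * chol_v \<Omega> K xs n lam k y)"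
proof
  fix y
  define \<beta> where "\<beta> = chol_beta K xs n lam"
  define b where "b = vec n (\<lambda>j. f (xs j))"
  note Mc = reg_mat_carrier[of K xs n lam]
  have \<beta>: "\<beta> \<in> carrier_mat n n" and inv: "\<beta> * transpose_mat \<beta> * reg_mat K xs n lam = 1\<^sub>m n"
    using cholesky_inverse_gram[OF M] Mc by (simp_all add: \<beta>_def chol_beta_def)
  have \<alpha>: "(THE \<alpha>. \<alpha> \<in> carrier_vec n \<and> reg_mat K xs n lam *\<^sub>v \<alpha> = b) $ j
      = (\<Sum>k<n. \<beta> $$ (j, k) * (\<Sum>l<n. \<beta> $$ (l, k) * f (xs l)))" if "j < n" for j
    using the_mat_solution[OF Mc _ inv] \<beta> that by (simp add: b_def scalar_prod_def atLeast0LessThan)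
  have "reg_interp \<Omega> K xs n lam f y
      = (\<Sum>j<n. (\<Sum>k<n. \<beta> $$ (j, k) * (\<Sum>l<n. \<beta> $$ (l, k) * f (xs l))) * kfun \<Omega> K (xs j) y)"
    unfolding reg_interp_def Let_def b_def[symmetric] using \<alpha> by simp
  also have "\<dots> = (\<Sum>j<n. \<Sum>k<n. \<beta> $$ (j, k) * (\<Sum>l<n. \<beta> $$ (l, k) * f (xs l)) * kfun \<Omega> K (xs j) y)"
    by (simp add: sum_distrib_right)
  also have "\<dots> = (\<Sum>k<n. \<Sum>j<n. \<beta> $$ (j, k) * (\<Sum>l<n. \<beta> $$ (l, k) * f (xs l)) * kfun \<Omega> K (xs j) y)"
    by (rule sum.swap)
  also have "\<dots> = (\<Sum>k<n. (\<Sum>l<n. \<beta> $$ (l, k) * f (xs l)) * chol_v \<Omega> K xs n lam k y)"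
    by (simp add: chol_v_eq \<beta>_def sum_distrib_left mult_ac)
  finally show "reg_interp \<Omega> K xs n lam f y
    = (\<Sum>k<n. (\<Sum>l<n. chol_beta K xs n lam $$ (l, k) * f (xs l)) * chol_v \<Omega> K xs n lam k y)"
    by (simp add: \<beta>_def)
qed

section \<open>Native spaces\<close>

locale rkhs =
  fixes \<Omega> :: "'a set" and K :: "'a \<Rightarrow> 'a \<Rightarrow> real"
    and H :: "('a \<Rightarrow> real) set" and ip :: "('a \<Rightarrow> real) \<Rightarrow> ('a \<Rightarrow> real) \<Rightarrow> real"
  assumes native_space: "native_space \<Omega> K H ip"
begin

lemma zero_mem: "(\<lambda>y. 0) \<in> H"
  and add_mem: "f \<in> H \<Longrightarrow> g \<in> H \<Longrightarrow> (\<lambda>y. f y + g y) \<in> H"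
  and scale_mem: "f \<in> H \<Longrightarrow> (\<lambda>y. c * f y) \<in> H"
  and kfun_mem: "x \<in> \<Omega> \<Longrightarrow> kfun \<Omega> K x \<in> H"
  and ip_commute: "f \<in> H \<Longrightarrow> g \<in> H \<Longrightarrow> ip f g = ip g f"
  and ip_add_left: "f \<in> H \<Longrightarrow> g \<in> H \<Longrightarrow> h \<in> H \<Longrightarrow> ip (\<lambda>y. f y + g y) h = ip f h + ip g h"
  and ip_scale_left: "f \<in> H \<Longrightarrow> g \<in> H \<Longrightarrow> ip (\<lambda>y. c * f y) g = c * ip f g"
  and ip_self_pos: "f \<in> H \<Longrightarrow> f \<noteq> (\<lambda>y. 0) \<Longrightarrow> ip f f > 0"
  and ip_kfun_right: "f \<in> H \<Longrightarrow> x \<in> \<Omega> \<Longrightarrow> ip f (kfun \<Omega> K x) = f x"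
  using native_space unfolding native_space_def by blast+

lemma ip_kfun_left: "f \<in> H \<Longrightarrow> x \<in> \<Omega> \<Longrightarrow> ip (kfun \<Omega> K x) f = f x"
  using ip_commute[OF _ kfun_mem] ip_kfun_right by simp

lemma ip_scale_right: "f \<in> H \<Longrightarrow> g \<in> H \<Longrightarrow> ip g (\<lambda>y. c * f y) = c * ip g f"
  using ip_commute[OF _ scale_mem] ip_scale_left ip_commute by simp

lemma diff_mem: "f \<in> H \<Longrightarrow> g \<in> H \<Longrightarrow> (\<lambda>y. f y - g y) \<in> H"
  using add_mem[OF _ scale_mem[of g "-1"], of f] by simp

lemma ip_diff_left:
  "f \<in> H \<Longrightarrow> g \<in> H \<Longrightarrow> h \<in> H \<Longrightarrow> ip (\<lambda>y. f y - g y) h = ip f h - ip g h"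
  using ip_add_left[OF _ scale_mem[of g "-1"], of f h] ip_scale_left[of g h "-1"] by simp

lemma ip_diff_right:
  assumes "f \<in> H" "g \<in> H" "h \<in> H"
  shows "ip h (\<lambda>y. f y - g y) = ip h f - ip h g"
  using ip_commute[OF assms(3) diff_mem[OF assms(1,2)]] ip_diff_left[OF assms]
    ip_commute[OF assms(1,3)] ip_commute[OF assms(2,3)] by simp

lemma sum_mem: "finite I \<Longrightarrow> (\<And>i. i \<in> I \<Longrightarrow> f i \<in> H) \<Longrightarrow> (\<lambda>y. \<Sum>i\<in>I. c i * f i y) \<in> H"
  by (induction I rule: finite_induct) (simp_all add: zero_mem add_mem scale_mem)

lemma ip_sum_left:
  assumes "finite I" "\<And>i. i \<in> I \<Longrightarrow> f i \<in> H" "g \<in> H"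
  shows "ip (\<lambda>y. \<Sum>i\<in>I. c i * f i y) g = (\<Sum>i\<in>I. c i * ip (f i) g)"
  using assms
proof (induction I rule: finite_induct)
  case empty
  then show ?case using ip_scale_left[OF zero_mem, of g 0] by simp
next
  case (insert a I)
  then show ?case
    by (simp add: ip_add_left ip_scale_left scale_mem sum_mem)
qed

lemma ip_sum_right:
  assumes "finite I" "\<And>i. i \<in> I \<Longrightarrow> f i \<in> H" "g \<in> H"
  shows "ip g (\<lambda>y. \<Sum>i\<in>I. c i * f i y) = (\<Sum>i\<in>I. c i * ip g (f i))"
proof -
  have "ip g (\<lambda>y. \<Sum>i\<in>I. c i * f i y) = (\<Sum>i\<in>I. c i * ip (f i) g)"
    using ip_commute[OF assms(3) sum_mem[OF assms(1,2)]] ip_sum_left[OF assms] by simp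
  also have "\<dots> = (\<Sum>i\<in>I. c i * ip g (f i))"
    using assms(2,3) ip_commute by (intro sum.cong) auto
  finally show ?thesis .
qed

lemma ip_self_nonneg: "f \<in> H \<Longrightarrow> ip f f \<ge> 0"
  using ip_self_pos[of f] ip_scale_left[OF zero_mem zero_mem, of 0]
  by (cases "f = (\<lambda>y. 0)") (simp_all add: less_imp_le)

lemma abs_ip_le_hnorm:
  assumes f: "f \<in> H" and g: "g \<in> H"
  shows "\<bar>ip f g\<bar> \<le> hnorm ip f * hnorm ip g"
proof (cases "g = (\<lambda>y. 0)")
  case True
  then show ?thesis
    using ip_scale_right[OF zero_mem f, of 0] f g ip_self_nonneg by (simp add: hnorm_def)
next
  case False
  then have gg: "ip g g > 0" using ip_self_pos g by simp
  define t where "t = ip f g / ip g g"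
  have tg: "(\<lambda>y. t * g y) \<in> H" using scale_mem g by simp
  have "0 \<le> ip (\<lambda>y. f y - t * g y) (\<lambda>y. f y - t * g y)"
    using diff_mem[OF f tg] by (rule ip_self_nonneg)
  also have "\<dots> = ip f f - 2 * t * ip f g + t * t * ip g g"
    using f g tg ip_commute[OF f g]
    by (simp add: ip_diff_left ip_diff_right ip_scale_left ip_scale_right diff_mem algebra_simps)
  also have "\<dots> = ip f f - (ip f g)\<^sup>2 / ip g g"
    using gg by (simp add: t_def field_simps power2_eq_square)
  finally have "(ip f g)\<^sup>2 \<le> ip f f * ip g g"
    using gg by (simp add: field_simps)
  then have "sqrt ((ip f g)\<^sup>2) \<le> sqrt (ip f f * ip g g)"
    by (rule real_sqrt_le_mono)
  then show ?thesis by (simp add: hnorm_def real_sqrt_mult)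
qed

lemma hnorm_pos: "f \<in> H \<Longrightarrow> f \<noteq> (\<lambda>y. 0) \<Longrightarrow> hnorm ip f > 0"
  using ip_self_pos by (simp add: hnorm_def)

lemma Sup_ratio_eq_hnorm_representer:
  assumes g: "g \<in> H" and e: "\<And>f. f \<in> H \<Longrightarrow> e f = ip f g"
  shows "Sup (insert 0 {\<bar>e f\<bar> / hnorm ip f | f. f \<in> H \<and> f \<noteq> (\<lambda>y. 0)}) = hnorm ip g"
proof (rule cSup_eq_maximum)
  show "hnorm ip g \<in> insert 0 {\<bar>e f\<bar> / hnorm ip f | f. f \<in> H \<and> f \<noteq> (\<lambda>y. 0)}"
  proof (cases "g = (\<lambda>y. 0)")
    case True
    then show ?thesis
      using ip_scale_left[OF zero_mem zero_mem, of 0] by (simp add: hnorm_def)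
  next
    case False
    have "hnorm ip g = \<bar>e g\<bar> / hnorm ip g"
      using e[OF g] ip_self_nonneg[OF g] by (simp add: hnorm_def real_div_sqrt)
    then have "\<exists>f. hnorm ip g = \<bar>e f\<bar> / hnorm ip f \<and> f \<in> H \<and> f \<noteq> (\<lambda>y. 0)"
      using g False by blast
    then show ?thesis by simp
  qed
next
  fix z assume "z \<in> insert 0 {\<bar>e f\<bar> / hnorm ip f | f. f \<in> H \<and> f \<noteq> (\<lambda>y. 0)}"
  then consider "z = 0" | f where "f \<in> H" "f \<noteq> (\<lambda>y. 0)" "z = \<bar>e f\<bar> / hnorm ip f"
    by blast
  then show "z \<le> hnorm ip g"
  proof cases
    case 1
    then show ?thesis using ip_self_nonneg[OF g] by (simp add: hnorm_def)
  next
    case 2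
    have "z = \<bar>ip f g\<bar> / hnorm ip f"
      using 2 e by simp
    also have "\<dots> \<le> hnorm ip f * hnorm ip g / hnorm ip f"
      using abs_ip_le_hnorm[OF 2(1) g] hnorm_pos[OF 2(1,2)] by (intro divide_right_mono) auto
    also have "\<dots> = hnorm ip g"
      using hnorm_pos[OF 2(1,2)] by simp
    finally show ?thesis .
  qed
qed

lemma error_eq_ip_kfun_residual:
  fixes v :: "nat \<Rightarrow> 'a \<Rightarrow> real"
  assumes v: "\<And>k. k < n \<Longrightarrow> v k \<in> H" and x: "x \<in> \<Omega>" and f: "f \<in> H"
  shows "f x - (\<Sum>k<n. ip f (v k) * v k x)
    = ip f (\<lambda>y. kfun \<Omega> K x y - (\<Sum>k<n. v k x * v k y))"
proof -
  have s: "(\<lambda>y. \<Sum>k<n. v k x * v k y) \<in> H"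
    using v by (intro sum_mem) auto
  have "ip f (\<lambda>y. kfun \<Omega> K x y - (\<Sum>k<n. v k x * v k y))
      = ip f (kfun \<Omega> K x) - ip f (\<lambda>y. \<Sum>k<n. v k x * v k y)"
    using ip_diff_right[OF kfun_mem[OF x] s f] .
  also have "\<dots> = f x - (\<Sum>k<n. v k x * ip f (v k))"
    using ip_kfun_right[OF f x] ip_sum_right[of "{..<n}" v f "\<lambda>k. v k x"] v f by simp
  also have "(\<Sum>k<n. v k x * ip f (v k)) = (\<Sum>k<n. ip f (v k) * v k x)"
    by (simp only: mult.commute)
  finally show ?thesis ..
qed

lemma hnorm_kfun_residual:
  fixes v :: "nat \<Rightarrow> 'a \<Rightarrow> real"
  assumes v: "\<And>k. k < n \<Longrightarrow> v k \<in> H" and x: "x \<in> \<Omega>"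
  shows "hnorm ip (\<lambda>y. kfun \<Omega> K x y - (\<Sum>k<n. v k x * v k y)) ^ 2
    = K x x - 2 * (\<Sum>k<n. v k x ^ 2) + (\<Sum>k<n. \<Sum>l<n. v k x * v l x * ip (v k) (v l))"
proof -
  define s where "s = (\<lambda>y. \<Sum>k<n. v k x * v k y)"
  have kx: "kfun \<Omega> K x \<in> H" and s: "s \<in> H"
    using kfun_mem[OF x] v unfolding s_def by (auto intro: sum_mem)
  have "ip (kfun \<Omega> K x) (kfun \<Omega> K x) = K x x"
    using ip_kfun_right[OF kx x] x by (simp add: kfun_def)
  moreover have "ip (kfun \<Omega> K x) s = (\<Sum>k<n. v k x ^ 2)" and "ip s (kfun \<Omega> K x) = (\<Sum>k<n. v k x ^ 2)"
    using ip_kfun_left[OF s x] ip_kfun_right[OF s x] by (simp_all add: s_def power2_eq_square)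
  moreover have "ip s s = (\<Sum>k<n. \<Sum>l<n. v k x * v l x * ip (v k) (v l))"
  proof -
    have "ip s s = (\<Sum>k<n. v k x * ip (v k) s)"
      unfolding s_def by (rule ip_sum_left) (use v s in \<open>auto simp: s_def\<close>)
    also have "\<dots> = (\<Sum>k<n. v k x * (\<Sum>l<n. v l x * ip (v k) (v l)))"
      unfolding s_def using v by (intro sum.cong refl arg_cong2[where f = "(*)"] ip_sum_right) auto
    finally show ?thesis by (simp add: sum_distrib_left mult.assoc)
  qed
  ultimately have "ip (\<lambda>y. kfun \<Omega> K x y - s y) (\<lambda>y. kfun \<Omega> K x y - s y)
      = K x x - 2 * (\<Sum>k<n. v k x ^ 2) + (\<Sum>k<n. \<Sum>l<n. v k x * v l x * ip (v k) (v l))"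
    using kx s by (simp add: ip_diff_left ip_diff_right diff_mem)
  then show ?thesis
    using ip_self_nonneg[OF diff_mem[OF kx s]] by (simp add: hnorm_def s_def)
qed

lemma chol_v_mem: "\<forall>i<n. xs i \<in> \<Omega> \<Longrightarrow> chol_v \<Omega> K xs n lam k \<in> H"
  unfolding chol_v_eq by (intro sum_mem) (auto intro: kfun_mem)

lemma reg_interp_eq_sum_ip_chol_v:
  assumes M: "sym_pos_def_mat (reg_mat K xs n lam)" and xs: "\<forall>i<n. xs i \<in> \<Omega>" and f: "f \<in> H"
  shows "reg_interp \<Omega> K xs n lam f
    = (\<lambda>y. \<Sum>k<n. ip f (chol_v \<Omega> K xs n lam k) * chol_v \<Omega> K xs n lam k y)"
proof -
  have "ip f (chol_v \<Omega> K xs n lam k) = (\<Sum>l<n. chol_beta K xs n lam $$ (l, k) * f (xs l))" for k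
    unfolding chol_v_eq using xs f by (subst ip_sum_right) (auto intro: kfun_mem simp: ip_kfun_right)
  then show ?thesis
    by (simp add: reg_interp_eq_sum_chol_v[OF M])
qed

end

theorem proposition3p1:
  fixes \<Omega> :: "(real ^ 'd) set" and K :: "real ^ 'd \<Rightarrow> real ^ 'd \<Rightarrow> real"
    and H :: "(real ^ 'd \<Rightarrow> real) set"
    and ip :: "(real ^ 'd \<Rightarrow> real) \<Rightarrow> (real ^ 'd \<Rightarrow> real) \<Rightarrow> real"
    and xs :: "nat \<Rightarrow> real ^ 'd" and n :: nat and lam :: real and x :: "real ^ 'd"
  assumes "(pd_kernel \<Omega> K \<and> lam > 0) \<or> (spd_kernel \<Omega> K \<and> lam \<ge> 0)"
    and "native_space \<Omega> K H ip"
    and "\<forall>i<n. xs i \<in> \<Omega>" and "inj_on xs {..<n}"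
    and "x \<in> \<Omega>"
  shows "power_fun \<Omega> K H ip xs n lam x ^ 2
           = hnorm ip (\<lambda>y. kfun \<Omega> K x y - reg_interp \<Omega> K xs n lam (kfun \<Omega> K x) y) ^ 2
       \<and> hnorm ip (\<lambda>y. kfun \<Omega> K x y - reg_interp \<Omega> K xs n lam (kfun \<Omega> K x) y) ^ 2
           = K x x - 2 * (\<Sum>k<n. chol_v \<Omega> K xs n lam k x ^ 2)
             + (\<Sum>k<n. \<Sum>l<n. chol_v \<Omega> K xs n lam k x * chol_v \<Omega> K xs n lam l x
                  * ip (chol_v \<Omega> K xs n lam k) (chol_v \<Omega> K xs n lam l))"
proof -
  interpret rkhs \<Omega> K H ip by (rule rkhs.intro) (rule assms(2))
  define v where "v = chol_v \<Omega> K xs n lam"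
  have M: "sym_pos_def_mat (reg_mat K xs n lam)"
    using assms(1,3,4) by (rule reg_mat_sym_pos_def)
  have v: "v k \<in> H" for k
    using chol_v_mem[OF assms(3)] by (simp add: v_def)
  have interp: "reg_interp \<Omega> K xs n lam f = (\<lambda>y. \<Sum>k<n. ip f (v k) * v k y)" if "f \<in> H" for f
    using reg_interp_eq_sum_ip_chol_v[OF M assms(3) that] by (simp add: v_def)
  have residual: "(\<lambda>y. kfun \<Omega> K x y - reg_interp \<Omega> K xs n lam (kfun \<Omega> K x) y)
      = (\<lambda>y. kfun \<Omega> K x y - (\<Sum>k<n. v k x * v k y))"
    using interp[OF kfun_mem[OF assms(5)]] ip_kfun_left[OF v assms(5)] by simp
  have "power_fun \<Omega> K H ip xs n lam x
      = hnorm ip (\<lambda>y. kfun \<Omega> K x y - reg_interp \<Omega> K xs n lam (kfun \<Omega> K x) y)"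
    unfolding power_fun_def residual
  proof (rule Sup_ratio_eq_hnorm_representer)
    show "(\<lambda>y. kfun \<Omega> K x y - (\<Sum>k<n. v k x * v k y)) \<in> H"
      using kfun_mem[OF assms(5)] v by (intro diff_mem sum_mem) auto
    show "f x - reg_interp \<Omega> K xs n lam f x = ip f (\<lambda>y. kfun \<Omega> K x y - (\<Sum>k<n. v k x * v k y))"
      if "f \<in> H" for f
      using error_eq_ip_kfun_residual[OF v assms(5) that] interp[OF that] by simp
  qed
  then show ?thesis
    using hnorm_kfun_residual[OF v assms(5)] unfolding residual v_def by simp
qed

end
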